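(* Let $(X,\mathcal{T})$ be a finite topological space with furtherness function $\Psi$. The collection $\mathcal{B}^-=\{B^-(x,n)\mid x\in X,\ n\in\mathbb{N}\}$ of backward open balls $B^-(x,n)=\{y\in X\mid \Psi(y,x)<n\}$ is a basis for a topology on $X$, and this topology is the opposite topology $\mathcal{T}^{op}$, i.e. the topology on $X$ whose open sets are exactly the closed sets of $\mathcal{T}$.
   Context: Here $\mathbb{N}=\{1,2,3,\dots\}$. For a finite topological space $X$ and $x\in X$, $U_x$ denotes the minimal open set containing $x$. A nested sequence of open sets around $x$ is a finite sequence $U_0\subsetneq U_1\subsetneq\cdots\subsetneq U_m=X$ of open sets with $U_0=U_x$ such that for each $j$ there is no open set $V$ with $U_j\subsetneq V\subsetneq U_{j+1}$. The furtherness function $\Psi:X\times X\to\{0,1,\dots,|X|-1\}$ is defined by: $\Psi(x,y)$ is the smallest integer $k\ge 0$ such that there exists a nested sequence $(U_j)_{j\ge0}$ of open sets around $x$ with $y\in U_k$. *)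

theory Defs
  imports "HOL-Analysis.Analysis"
begin

definition minimal_open :: "'a topology \<Rightarrow> 'a \<Rightarrow> 'a set" where
  "minimal_open T x = topspace T \<inter> \<Inter>{U. openin T U \<and> x \<in> U}"

definition nested_seq :: "'a topology \<Rightarrow> 'a \<Rightarrow> 'a set list \<Rightarrow> bool" where
  "nested_seq T x Us \<longleftrightarrow>
     Us \<noteq> [] \<and>
     (\<forall>j < length Us. openin T (Us ! j)) \<and>
     Us ! 0 = minimal_open T x \<and>
     last Us = topspace T \<and>
     (\<forall>j. Suc j < length Us \<longrightarrow>
        Us ! j \<subset> Us ! Suc j \<and>
        \<not> (\<exists>V. openin T V \<and> Us ! j \<subset> V \<and> V \<subset> Us ! Suc j))"

definition furtherness :: "'a topology \<Rightarrow> 'a \<Rightarrow> 'a \<Rightarrow> nat" where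
  "furtherness T x y =
     (LEAST k. \<exists>Us. nested_seq T x Us \<and> k < length Us \<and> y \<in> Us ! k)"

definition backward_ball :: "'a topology \<Rightarrow> 'a \<Rightarrow> nat \<Rightarrow> 'a set" where
  "backward_ball T x n = {y \<in> topspace T. furtherness T y x < n}"

definition backward_balls :: "'a topology \<Rightarrow> 'a set set" where
  "backward_balls T = {backward_ball T x n | x n. x \<in> topspace T \<and> n \<ge> 1}"

definition is_basis_on :: "'a set \<Rightarrow> 'a set set \<Rightarrow> bool" where
  "is_basis_on X B \<longleftrightarrow>
     (\<forall>b\<in>B. b \<subseteq> X) \<and> \<Union>B = X \<and>
     (\<forall>b1\<in>B. \<forall>b2\<in>B. \<forall>x\<in>b1 \<inter> b2. \<exists>b3\<in>B. x \<in> b3 \<and> b3 \<subseteq> b1 \<inter> b2)"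

end

(*
  In a finite space every point z has a smallest open neighbourhood U_z, and a nested sequence
  around y is a maximal chain of open sets from U_y up to X. In a covering step V < W of the
  lattice of open sets all points of W - V have the same minimal neighbourhood, so every step of
  a maximal chain adds exactly one class of topologically indistinguishable points. Hence
  Psi(y,x) is the number of such classes in U_x - U_y. This number can only grow when y is
  replaced by a point of U_y, so every backward ball is closed, and B^-(x,1) = {y. x in U_y} is
  the closure of {x}. Finally, in a finite space the unions of closed sets containing all point
  closures are exactly the closed sets.
*)
theory Submission
  imports Defs
begin

section \<open>Minimal open sets\<close>

lemma minimal_open_subset_topspace: "minimal_open T x \<subseteq> topspace T"
  unfolding minimal_open_def by auto

lemma mem_minimal_open: "x \<in> topspace T \<Longrightarrow> x \<in> minimal_open T x"
  unfolding minimal_open_def by auto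

lemma minimal_open_least: "openin T V \<Longrightarrow> x \<in> V \<Longrightarrow> minimal_open T x \<subseteq> V"
  unfolding minimal_open_def by auto

lemma openin_minimal_open:
  assumes fin: "finite (topspace T)" and x: "x \<in> topspace T"
  shows "openin T (minimal_open T x)"
proof -
  have "{U. openin T U \<and> x \<in> U} \<subseteq> Pow (topspace T)"
    by (auto dest: openin_subset)
  then have "finite {U. openin T U \<and> x \<in> U}"
    using fin by (simp add: finite_subset)
  moreover have "minimal_open T x = \<Inter>{U. openin T U \<and> x \<in> U}"
    using x unfolding minimal_open_def by (auto dest: openin_subset)
  ultimately show ?thesis
    using x openin_topspace[of T] by (metis (no_types, lifting) empty_iff mem_Collect_eq openin_Inter)
qed

lemma minimal_open_subset_iff:
  assumes "finite (topspace T)" and "x \<in> topspace T" and "y \<in> topspace T"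
  shows "minimal_open T y \<subseteq> minimal_open T x \<longleftrightarrow> y \<in> minimal_open T x"
  using mem_minimal_open[OF assms(3)] minimal_open_least[OF openin_minimal_open[OF assms(1,2)]]
  by blast

lemma in_closure_of_singleton_iff:
  assumes "finite (topspace T)" and "x \<in> topspace T" and "y \<in> topspace T"
  shows "y \<in> T closure_of {x} \<longleftrightarrow> x \<in> minimal_open T y"
  using assms openin_minimal_open[OF assms(1,3)] mem_minimal_open[OF assms(3)]
  by (auto simp: in_closure_of dest: minimal_open_least)

section \<open>Counting points up to indistinguishability\<close>

text \<open>Points with the same minimal open set are topologically indistinguishable.\<close>

definition class_count :: "'a topology \<Rightarrow> 'a set \<Rightarrow> nat" where
  "class_count T S = card (minimal_open T ` S)"

lemma class_count_Diff_add:
  assumes fin: "finite (topspace T)" and V: "openin T V"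
    and "A \<subseteq> V" "V \<subseteq> W" "W \<subseteq> topspace T"
  shows "class_count T (W - A) = class_count T (W - V) + class_count T (V - A)"
proof -
  have "minimal_open T ` (W - V) \<inter> minimal_open T ` (V - A) = {}"
  proof (rule ccontr)
    assume "\<not> ?thesis"
    then obtain q p where q: "q \<in> W - V" and p: "p \<in> V - A"
      and eq: "minimal_open T q = minimal_open T p"
      by auto
    have "q \<in> minimal_open T p"
      using eq mem_minimal_open[of q T] q \<open>W \<subseteq> topspace T\<close> by auto
    then show False
      using minimal_open_least[OF V] p q by blast
  qed
  moreover have "W - A = (W - V) \<union> (V - A)"
    using assms by auto
  moreover have "finite (W - V)" "finite (V - A)"
    using assms finite_subset[OF _ fin] by auto
  ultimately show ?thesis
    unfolding class_count_def by (simp add: image_Un card_Un_disjoint)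
qed

lemma class_count_eq_0_iff:
  assumes "finite (topspace T)" and "S \<subseteq> topspace T"
  shows "class_count T S = 0 \<longleftrightarrow> S = {}"
  using finite_subset[OF assms(2,1)] unfolding class_count_def by simp

lemma class_count_mono:
  assumes "finite (topspace T)" and "S' \<subseteq> topspace T" and "S \<subseteq> S'"
  shows "class_count T S \<le> class_count T S'"
  using finite_subset[OF assms(2,1)] assms(3) unfolding class_count_def
  by (simp add: card_mono image_mono)

section \<open>Maximal chains of open sets\<close>

definition covers :: "'a topology \<Rightarrow> 'a set \<Rightarrow> 'a set \<Rightarrow> bool" where
  "covers T A V \<longleftrightarrow> A \<subset> V \<and> \<not> (\<exists>W. openin T W \<and> A \<subset> W \<and> W \<subset> V)"

lemma covers_exists:
  assumes fin: "finite (topspace T)" and "openin T A" "openin T W" "A \<subset> W"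
  obtains V where "openin T V" "V \<subseteq> W" "covers T A V"
proof -
  let ?S = "{V. openin T V \<and> A \<subset> V \<and> V \<subseteq> W}"
  have "?S \<subseteq> Pow (topspace T)"
    by (auto dest: openin_subset)
  then have "finite ?S"
    by (rule finite_subset) (simp add: fin)
  moreover have "W \<in> ?S"
    using assms by simp
  ultimately obtain V where V: "V \<in> ?S" and min: "\<And>U. U \<in> ?S \<Longrightarrow> U \<subseteq> V \<Longrightarrow> V = U"
    using finite_has_minimal2[of ?S W] by auto
  have "\<not> (\<exists>U. openin T U \<and> A \<subset> U \<and> U \<subset> V)"
  proof
    assume "\<exists>U. openin T U \<and> A \<subset> U \<and> U \<subset> V"
    then obtain U where "openin T U" "A \<subset> U" "U \<subset> V"
      by blast
    then show False
      using V min[of U] by auto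
  qed
  then have "covers T A V"
    using V unfolding covers_def by simp
  moreover have "openin T V" "V \<subseteq> W"
    using V by simp_all
  ultimately show ?thesis
    using that by blast
qed

lemma class_count_covers:
  assumes fin: "finite (topspace T)" and A: "openin T A" and V: "openin T V"
    and cov: "covers T A V"
  shows "class_count T (V - A) = 1"
proof -
  have VX: "V \<subseteq> topspace T"
    using V by (rule openin_subset)
  have union: "A \<union> minimal_open T q = V" if q: "q \<in> V - A" for q
  proof -
    have qX: "q \<in> topspace T"
      using q VX by blast
    have "openin T (A \<union> minimal_open T q)"
      using A openin_minimal_open[OF fin qX] by blast
    moreover have "A \<subset> A \<union> minimal_open T q"
      using q mem_minimal_open[OF qX] by blast
    moreover have "A \<union> minimal_open T q \<subseteq> V"
      using q minimal_open_least[OF V] cov unfolding covers_def by blast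
    ultimately show ?thesis
      using cov unfolding covers_def by blast
  qed
  obtain p where p: "p \<in> V - A"
    using cov unfolding covers_def by auto
  have "minimal_open T q = minimal_open T p" if q: "q \<in> V - A" for q
  proof -
    have "q \<in> minimal_open T p" "p \<in> minimal_open T q"
      using union[OF p] union[OF q] p q by blast+
    then show ?thesis
      using p q VX minimal_open_subset_iff[OF fin] by blast
  qed
  then have "minimal_open T ` (V - A) = {minimal_open T p}"
    using p by blast
  then show ?thesis
    unfolding class_count_def by simp
qed

definition chain_from :: "'a topology \<Rightarrow> 'a set \<Rightarrow> 'a set list \<Rightarrow> bool" where
  "chain_from T A Us \<longleftrightarrow>
     Us \<noteq> [] \<and> (\<forall>j < length Us. openin T (Us ! j)) \<and> Us ! 0 = A \<and> last Us = topspace T \<and>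
     (\<forall>j. Suc j < length Us \<longrightarrow> covers T (Us ! j) (Us ! Suc j))"

lemma nested_seq_iff_chain_from: "nested_seq T x Us \<longleftrightarrow> chain_from T (minimal_open T x) Us"
  unfolding nested_seq_def chain_from_def covers_def by blast

lemma chain_from_topspace: "chain_from T (topspace T) [topspace T]"
  unfolding chain_from_def by simp

lemma chain_from_Cons:
  assumes "chain_from T V Vs" and "openin T A" and "covers T A V"
  shows "chain_from T A (A # Vs)"
  using assms unfolding chain_from_def by (auto simp: nth_Cons split: nat.splits)

lemma chain_from_through:
  assumes fin: "finite (topspace T)"
  shows "openin T A \<Longrightarrow> openin T W \<Longrightarrow> A \<subseteq> W \<Longrightarrow>
    \<exists>Us k. chain_from T A Us \<and> k < length Us \<and> Us ! k = W"
proof (induction "card (topspace T - A)" arbitrary: A W rule: less_induct)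
  case less
  have AX: "A \<subseteq> topspace T" and WX: "W \<subseteq> topspace T"
    using less.prems openin_subset by blast+
  show ?case
  proof (cases "A = topspace T")
    case True
    then have "W = topspace T"
      using less.prems WX by blast
    then show ?thesis
      using True chain_from_topspace[of T] by (intro exI[of _ "[topspace T]"] exI[of _ 0]) simp
  next
    case False
    \<comment> \<open>For \<open>A = W\<close> the chain must still be continued from \<open>A\<close>, so aim for the whole space.\<close>
    define W' where "W' = (if A = W then topspace T else W)"
    have W': "openin T W'" "A \<subset> W'"
      using less.prems False AX unfolding W'_def by auto
    then obtain V where V: "openin T V" "V \<subseteq> W'" "covers T A V"
      using covers_exists[OF fin less.prems(1)] by blast
    have "topspace T - V \<subset> topspace T - A"
      using V(3) openin_subset[OF V(1)] unfolding covers_def by blast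
    then have "card (topspace T - V) < card (topspace T - A)"
      by (rule psubset_card_mono[OF finite_Diff[OF fin]])
    then obtain Vs k where Vs: "chain_from T V Vs" "k < length Vs" "Vs ! k = W'"
      using less.hyps[OF _ V(1) W'(1) V(2)] by blast
    have chain: "chain_from T A (A # Vs)"
      using Vs(1) less.prems(1) V(3) by (rule chain_from_Cons)
    show ?thesis
    proof (cases "A = W")
      case True
      then show ?thesis
        using chain by (intro exI[of _ "A # Vs"] exI[of _ 0]) simp
    next
      case False
      then show ?thesis
        using chain Vs unfolding W'_def by (intro exI[of _ "A # Vs"] exI[of _ "Suc k"]) simp
    qed
  qed
qed

lemma class_count_chain_from:
  assumes fin: "finite (topspace T)" and chain: "chain_from T A Us"
  shows "k < length Us \<Longrightarrow> A \<subseteq> Us ! k \<and> class_count T (Us ! k - A) = k"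
proof (induction k)
  case 0
  then show ?case
    using chain unfolding chain_from_def class_count_def by simp
next
  case (Suc k)
  have "openin T (Us ! k)" "openin T (Us ! Suc k)" "covers T (Us ! k) (Us ! Suc k)"
    using chain Suc.prems unfolding chain_from_def by auto
  moreover have "A \<subseteq> Us ! k" "class_count T (Us ! k - A) = k"
    using Suc by simp_all
  ultimately show ?case
    using class_count_Diff_add[OF fin, of "Us ! k" A "Us ! Suc k"] class_count_covers[OF fin]
    unfolding covers_def by (auto dest: openin_subset)
qed

section \<open>The furtherness function\<close>

lemma furtherness_eq_class_count:
  assumes fin: "finite (topspace T)" and x: "x \<in> topspace T" and y: "y \<in> topspace T"
  shows "furtherness T y x = class_count T (minimal_open T x - minimal_open T y)"
proof -
  let ?P = "\<lambda>k. \<exists>Us. chain_from T (minimal_open T y) Us \<and> k < length Us \<and> x \<in> Us ! k"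
  have furtherness: "furtherness T y x = (LEAST k. ?P k)"
    unfolding furtherness_def nested_seq_iff_chain_from ..
  have Ux: "openin T (minimal_open T x)" and Uy: "openin T (minimal_open T y)"
    using openin_minimal_open[OF fin] x y by blast+
  obtain Us k where Us: "chain_from T (minimal_open T y) Us" "k < length Us"
    "Us ! k = minimal_open T y \<union> minimal_open T x"
    using chain_from_through[OF fin Uy openin_Un[OF Uy Ux] Un_upper1] by blast
  have "?P k"
    using Us mem_minimal_open[OF x] by auto
  then have "furtherness T y x \<le> k"
    unfolding furtherness by (rule Least_le)
  also have "k = class_count T (minimal_open T x - minimal_open T y)"
    using class_count_chain_from[OF fin Us(1,2)] Us(3) by (simp add: Un_Diff)
  finally have le: "furtherness T y x \<le> class_count T (minimal_open T x - minimal_open T y)" .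
  obtain Vs where Vs: "chain_from T (minimal_open T y) Vs" "furtherness T y x < length Vs"
    "x \<in> Vs ! furtherness T y x"
    using LeastI[of ?P, OF \<open>?P k\<close>] unfolding furtherness by blast
  let ?V = "Vs ! furtherness T y x"
  have V: "openin T ?V"
    using Vs(1,2) unfolding chain_from_def by blast
  then have "minimal_open T x - minimal_open T y \<subseteq> ?V - minimal_open T y"
    using minimal_open_least[OF V Vs(3)] by blast
  then have "class_count T (minimal_open T x - minimal_open T y)
      \<le> class_count T (?V - minimal_open T y)"
    using openin_subset[OF V] by (intro class_count_mono[OF fin]) auto
  also have "\<dots> = furtherness T y x"
    using class_count_chain_from[OF fin Vs(1,2)] by simp
  finally show ?thesis
    using le by simp
qed

lemma furtherness_antimono:
  assumes fin: "finite (topspace T)" and x: "x \<in> topspace T" and z: "z \<in> topspace T"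
    and w: "w \<in> minimal_open T z"
  shows "furtherness T z x \<le> furtherness T w x"
proof -
  have wX: "w \<in> topspace T"
    using w minimal_open_subset_topspace[of T z] by blast
  have "minimal_open T w \<subseteq> minimal_open T z"
    using minimal_open_subset_iff[OF fin z wX] w by blast
  then have "minimal_open T x - minimal_open T z \<subseteq> minimal_open T x - minimal_open T w"
    by blast
  then show ?thesis
    unfolding furtherness_eq_class_count[OF fin x z] furtherness_eq_class_count[OF fin x wX]
    using minimal_open_subset_topspace[of T x] by (intro class_count_mono[OF fin]) auto
qed

lemma closedin_backward_ball:
  assumes fin: "finite (topspace T)" and x: "x \<in> topspace T"
  shows "closedin T (backward_ball T x n)"
  unfolding closedin_def
proof
  show "backward_ball T x n \<subseteq> topspace T"
    unfolding backward_ball_def by blast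
  have saturated: "minimal_open T z \<subseteq> topspace T - backward_ball T x n"
    if z: "z \<in> topspace T - backward_ball T x n" for z
  proof
    fix w
    assume w: "w \<in> minimal_open T z"
    have zX: "z \<in> topspace T"
      using z by blast
    then have "\<not> furtherness T z x < n"
      using z unfolding backward_ball_def by simp
    then have "\<not> furtherness T w x < n"
      using furtherness_antimono[OF fin x zX w] by linarith
    moreover have "w \<in> topspace T"
      using w minimal_open_subset_topspace[of T z] by blast
    ultimately show "w \<in> topspace T - backward_ball T x n"
      unfolding backward_ball_def by blast
  qed
  show "openin T (topspace T - backward_ball T x n)"
  proof (subst openin_subopen, intro ballI exI conjI)
    fix z
    assume z: "z \<in> topspace T - backward_ball T x n"
    then have zX: "z \<in> topspace T"
      by blast
    show "openin T (minimal_open T z)"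
      using zX by (rule openin_minimal_open[OF fin])
    show "z \<in> minimal_open T z"
      using zX by (rule mem_minimal_open)
    show "minimal_open T z \<subseteq> topspace T - backward_ball T x n"
      using z by (rule saturated)
  qed
qed

lemma backward_ball_1_eq_closure_of:
  assumes fin: "finite (topspace T)" and x: "x \<in> topspace T"
  shows "backward_ball T x 1 = T closure_of {x}"
proof (rule set_eqI)
  fix y
  show "y \<in> backward_ball T x 1 \<longleftrightarrow> y \<in> T closure_of {x}"
  proof (cases "y \<in> topspace T")
    case True
    have sub: "minimal_open T x - minimal_open T y \<subseteq> topspace T"
      using minimal_open_subset_topspace[of T x] by blast
    have "furtherness T y x < 1 \<longleftrightarrow> class_count T (minimal_open T x - minimal_open T y) = 0"
      by (simp add: furtherness_eq_class_count[OF fin x True])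
    also have "\<dots> \<longleftrightarrow> minimal_open T x \<subseteq> minimal_open T y"
      using class_count_eq_0_iff[OF fin sub] by blast
    also have "\<dots> \<longleftrightarrow> y \<in> T closure_of {x}"
      using minimal_open_subset_iff[OF fin True x] in_closure_of_singleton_iff[OF fin x True] by blast
    finally show ?thesis
      using True unfolding backward_ball_def by blast
  next
    case False
    then show ?thesis
      using closure_of_subset_topspace[of T "{x}"] unfolding backward_ball_def by blast
  qed
qed

section \<open>Bases of the opposite topology\<close>

lemma is_basis_on_if_point_closures:
  assumes closed: "\<And>b. b \<in> B \<Longrightarrow> closedin T b"
    and closures: "\<And>x. x \<in> topspace T \<Longrightarrow> T closure_of {x} \<in> B"
  shows "is_basis_on (topspace T) B"
  unfolding is_basis_on_def
proof (intro conjI ballI)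
  show sub: "b \<subseteq> topspace T" if "b \<in> B" for b
    using closed[OF that] by (rule closedin_subset)
  have x_closure: "x \<in> T closure_of {x}" if "x \<in> topspace T" for x
    using closure_of_subset[of "{x}" T] that by blast
  show "\<Union>B = topspace T"
    using sub closures x_closure by blast
  show "\<exists>b\<in>B. x \<in> b \<and> b \<subseteq> b1 \<inter> b2" if "b1 \<in> B" "b2 \<in> B" "x \<in> b1 \<inter> b2" for b1 b2 x
  proof -
    have x: "x \<in> topspace T"
      using that sub by blast
    have "T closure_of {x} \<subseteq> b1" "T closure_of {x} \<subseteq> b2"
      using that closure_of_minimal[of "{x}" _ T] closed by auto
    then show ?thesis
      using closures[OF x] x_closure[OF x] by blast
  qed
qed

lemma generated_open_iff_closedin_if_point_closures:
  assumes fin: "finite (topspace T)" and closed: "\<And>b. b \<in> B \<Longrightarrow> closedin T b"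
    and closures: "\<And>x. x \<in> topspace T \<Longrightarrow> T closure_of {x} \<in> B"
  shows "(U \<subseteq> topspace T \<and> (\<forall>x\<in>U. \<exists>b\<in>B. x \<in> b \<and> b \<subseteq> U)) \<longleftrightarrow> closedin T U"
proof
  assume U: "U \<subseteq> topspace T \<and> (\<forall>x\<in>U. \<exists>b\<in>B. x \<in> b \<and> b \<subseteq> U)"
  have "{b \<in> B. b \<subseteq> U} \<subseteq> Pow (topspace T)"
    using U by blast
  then have "finite {b \<in> B. b \<subseteq> U}"
    by (rule finite_subset) (simp add: fin)
  then have "closedin T (\<Union>{b \<in> B. b \<subseteq> U})"
    by (rule closedin_Union) (simp add: closed)
  moreover have "\<Union>{b \<in> B. b \<subseteq> U} = U"
    using U by blast
  ultimately show "closedin T U"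
    by simp
next
  assume U: "closedin T U"
  have "\<exists>b\<in>B. x \<in> b \<and> b \<subseteq> U" if x: "x \<in> U" for x
  proof
    have "{x} \<subseteq> topspace T"
      using x closedin_subset[OF U] by blast
    then show "T closure_of {x} \<in> B"
      by (simp add: closures)
    show "x \<in> T closure_of {x} \<and> T closure_of {x} \<subseteq> U"
      using x U closure_of_subset[OF \<open>{x} \<subseteq> topspace T\<close>] closure_of_minimal[of "{x}" U T] by simp
  qed
  then show "U \<subseteq> topspace T \<and> (\<forall>x\<in>U. \<exists>b\<in>B. x \<in> b \<and> b \<subseteq> U)"
    using closedin_subset[OF U] by blast
qed

theorem mainTheorem12:
  fixes T :: "'a topology"
  assumes "finite (topspace T)"
  shows "is_basis_on (topspace T) (backward_balls T) \<and>
         (\<forall>U. (U \<subseteq> topspace T \<and>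
               (\<forall>x\<in>U. \<exists>b\<in>backward_balls T. x \<in> b \<and> b \<subseteq> U))
              \<longleftrightarrow> closedin T U)"
proof -
  have closed: "closedin T b" if "b \<in> backward_balls T" for b
    using that closedin_backward_ball[OF assms] unfolding backward_balls_def by blast
  have closures: "T closure_of {x} \<in> backward_balls T" if "x \<in> topspace T" for x
    using that backward_ball_1_eq_closure_of[OF assms] unfolding backward_balls_def by force
  show ?thesis
    using is_basis_on_if_point_closures[OF closed closures]
      generated_open_iff_closedin_if_point_closures[OF assms closed closures] by blast
qed

end
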